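(* Let $n,d,k$ be positive integers with $n\ge dk$. Then the value of the single-treasure-per-door search game with parameters $(n,d,k)$ is $$v_1(n,d,k)=\frac{k^d}{\binom nd}.$$
   Context: The single-treasure-per-door search game with parameters $(n,d,k)$ is the following two-player zero-sum game. First the hider places $d$ treasures behind $n$ doors, at most one treasure behind each door. Then the searcher plays rounds: in each round she selects (guesses) a set of at most $k$ doors. If none of the selected doors hides a treasure not yet found, she loses immediately. Otherwise the hider reveals one not-yet-found treasure behind one of the selected doors (the hider chooses which one if there are several). The searcher wins if she finds all $d$ treasures with a total of $d$ guesses (rounds). The searcher's choices may be randomized and may depend on all previous answers; the hider may randomize his hiding and revealing choices. The value $v_1(n,d,k)$ is the probability that the searcher wins when both players play optimally. *)

theory Defs
  imports "HOL-Probability.Probability_Mass_Function"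
begin

text \<open>Doors are 0..<n. A history is the list of past rounds, each round being
 (set of guessed doors, door revealed by the hider).\<close>

type_synonym history = "(nat set \<times> nat) list"

type_synonym searcher = "history \<Rightarrow> nat set"
type_synonym revealer = "history \<Rightarrow> nat set \<Rightarrow> nat"

definition found :: "history \<Rightarrow> nat set" where
  "found h = snd ` set h"

definition valid_searcher :: "nat \<Rightarrow> nat \<Rightarrow> searcher \<Rightarrow> bool" where
  "valid_searcher n k s \<longleftrightarrow>
     (\<forall>h. s h \<subseteq> {0..<n} \<and> finite (s h) \<and> card (s h) \<le> k)"

definition valid_hider :: "nat \<Rightarrow> nat \<Rightarrow> nat set \<Rightarrow> revealer \<Rightarrow> bool" where
  "valid_hider n d T r \<longleftrightarrow>
     T \<subseteq> {0..<n} \<and> card T = d \<and>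
     (\<forall>h G. G \<inter> (T - found h) \<noteq> {} \<longrightarrow> r h G \<in> G \<inter> (T - found h))"

fun wins :: "searcher \<Rightarrow> revealer \<Rightarrow> nat set \<Rightarrow> history \<Rightarrow> nat \<Rightarrow> bool" where
  "wins s r T h 0 = True"
| "wins s r T h (Suc m) =
     (let G = s h in
      if G \<inter> (T - found h) = {} then False
      else wins s r T (h @ [(G, r h G)]) m)"

definition is_value_v1 :: "nat \<Rightarrow> nat \<Rightarrow> nat \<Rightarrow> real \<Rightarrow> bool" where
  "is_value_v1 n d k v \<longleftrightarrow>
     (\<exists>\<sigma> :: searcher pmf.
        (\<forall>s\<in>set_pmf \<sigma>. valid_searcher n k s) \<and>
        (\<forall>T r. valid_hider n d T r \<longrightarrow>
           measure_pmf.prob \<sigma> {s. wins s r T [] d} \<ge> v)) \<and>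
     (\<exists>\<tau> :: (nat set \<times> revealer) pmf.
        (\<forall>(T, r)\<in>set_pmf \<tau>. valid_hider n d T r) \<and>
        (\<forall>s. valid_searcher n k s \<longrightarrow>
           measure_pmf.prob \<tau> {(T, r). wins s r T [] d} \<le> v))"

end

theory Submission
  imports Defs "HOL-Combinatorics.Permutations"
begin

text \<open>Upper bound: the hider hides a uniformly random \<open>d\<close>-set and always reveals its least
  treasure among the guessed doors. Against this hider a pure searcher generates at most
  \<open>k\<^sup>d\<close> histories of length \<open>d\<close>, each finding one fixed set of doors, so at most \<open>k\<^sup>d\<close> of the
  \<open>(n choose d)\<close> treasure sets are found.

  Lower bound: as \<open>dk \<le> n\<close>, the doors \<open>0..<dk\<close> split into \<open>d\<close> blocks of size \<open>k\<close>; the searcher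
  applies a uniformly random permutation to the doors and guesses the \<open>j\<close>-th permuted block in
  round \<open>j\<close>. She wins whenever every permuted block contains a treasure, whatever the hider
  reveals. For a fixed permutation at least \<open>k\<^sup>d\<close> treasure sets meet every block, and by symmetry
  every treasure set is met by the same number of permutations, so each treasure set is found
  with probability at least \<open>k\<^sup>d / (n choose d)\<close>.\<close>

lemma found_Nil [simp]: "found [] = {}"
  by (simp add: found_def)

lemma found_snoc [simp]: "found (h @ [(G, x)]) = insert x (found h)"
  by (auto simp: found_def)

lemma finite_found [simp]: "finite (found h)"
  by (simp add: found_def)

definition treasure_sets :: "nat \<Rightarrow> nat \<Rightarrow> nat set set" where
  "treasure_sets n d = {T. T \<subseteq> {0..<n} \<and> card T = d}"

lemma finite_treasure_sets [simp]: "finite (treasure_sets n d)"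
  unfolding treasure_sets_def by (rule finite_subset[of _ "Pow {0..<n}"]) auto

lemma card_treasure_sets: "card (treasure_sets n d) = n choose d"
  unfolding treasure_sets_def using n_subsets[of "{0..<n}" d] by simp

lemma treasure_sets_nonempty: "d \<le> n \<Longrightarrow> treasure_sets n d \<noteq> {}"
  using card_treasure_sets[of n d] by force

lemma valid_hider_treasure_set: "valid_hider n d T r \<Longrightarrow> T \<in> treasure_sets n d"
  by (simp add: valid_hider_def treasure_sets_def)

lemma finite_treasure_set: "T \<in> treasure_sets n d \<Longrightarrow> finite T"
  unfolding treasure_sets_def using finite_subset by blast

subsection \<open>The hider's guarantee\<close>

fun reachable_histories :: "searcher \<Rightarrow> nat \<Rightarrow> history set" where
  "reachable_histories s 0 = {[]}"
| "reachable_histories s (Suc m) =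
     (\<Union>h\<in>reachable_histories s m. (\<lambda>x. h @ [(s h, x)]) ` s h)"

lemma finite_reachable_histories:
  "(\<And>h. finite (s h)) \<Longrightarrow> finite (reachable_histories s m)"
  by (induction m) auto

lemma card_reachable_histories_le:
  assumes "\<And>h. finite (s h)" and "\<And>h. card (s h) \<le> k"
  shows "card (reachable_histories s m) \<le> k ^ m"
proof (induction m)
  case 0
  then show ?case by simp
next
  case (Suc m)
  have "card (reachable_histories s (Suc m))
      \<le> (\<Sum>h\<in>reachable_histories s m. card ((\<lambda>x. h @ [(s h, x)]) ` s h))"
    using finite_reachable_histories[OF assms(1)] by (simp add: card_UN_le)
  also have "\<dots> \<le> (\<Sum>h\<in>reachable_histories s m. k)"
    by (rule sum_mono) (meson assms(2) card_image_le[OF assms(1)] le_trans)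
  also have "\<dots> \<le> k ^ Suc m"
    using Suc by (simp add: mult.commute)
  finally show ?case .
qed

lemma wins_reaches_larger_found:
  assumes hider: "valid_hider n d T r"
  shows "wins s r T h m \<Longrightarrow> h \<in> reachable_histories s j \<Longrightarrow> found h \<subseteq> T \<Longrightarrow>
    \<exists>h'\<in>reachable_histories s (j + m). found h' \<subseteq> T \<and> card (found h) + m \<le> card (found h')"
proof (induction m arbitrary: h j)
  case 0
  then show ?case by auto
next
  case (Suc m)
  let ?G = "s h"
  let ?h = "h @ [(?G, r h ?G)]"
  have "?G \<inter> (T - found h) \<noteq> {}" and wins: "wins s r T ?h m"
    using Suc.prems(1) by (auto simp: Let_def split: if_splits)
  then have revealed: "r h ?G \<in> ?G \<inter> (T - found h)"
    using hider by (auto simp: valid_hider_def)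
  have "?h \<in> reachable_histories s (Suc j)" and "found ?h \<subseteq> T"
    using Suc.prems(2,3) revealed by auto
  then obtain h' where "h' \<in> reachable_histories s (Suc j + m)" "found h' \<subseteq> T"
    "card (found ?h) + m \<le> card (found h')"
    using Suc.IH[OF wins] by blast
  moreover have "card (found ?h) = Suc (card (found h))"
    using revealed by simp
  ultimately show ?case
    by (metis add_Suc add_Suc_right)
qed

lemma wins_imp_found_reachable:
  assumes "valid_hider n d T r" and "wins s r T [] d"
  shows "T \<in> found ` reachable_histories s d"
proof -
  obtain h' where h': "h' \<in> reachable_histories s d" "found h' \<subseteq> T" "d \<le> card (found h')"
    using wins_reaches_larger_found[OF assms, of 0] by auto
  have "finite T" and "card T = d"
    using finite_treasure_set[OF valid_hider_treasure_set[OF assms(1)]] assms(1)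
    by (auto simp: valid_hider_def)
  then have "found h' = T"
    using h' by (simp add: card_seteq)
  then show ?thesis
    using h'(1) by blast
qed

definition min_revealer :: "nat set \<Rightarrow> revealer" where
  "min_revealer T h G = Min (G \<inter> (T - found h))"

lemma valid_hider_min_revealer:
  assumes "T \<in> treasure_sets n d"
  shows "valid_hider n d T (min_revealer T)"
proof -
  have "Min (G \<inter> (T - found h)) \<in> G \<inter> (T - found h)" if "G \<inter> (T - found h) \<noteq> {}" for G h
    using finite_treasure_set[OF assms] that by (intro Min_in) auto
  then show ?thesis
    using assms by (simp add: valid_hider_def treasure_sets_def min_revealer_def)
qed

lemma card_found_treasure_sets_le:
  assumes "valid_searcher n k s"
  shows "card {T \<in> treasure_sets n d. wins s (min_revealer T) T [] d} \<le> k ^ d"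
proof -
  have fin: "\<And>h. finite (s h)" and bound: "\<And>h. card (s h) \<le> k"
    using assms by (auto simp: valid_searcher_def)
  have "{T \<in> treasure_sets n d. wins s (min_revealer T) T [] d}
      \<subseteq> found ` reachable_histories s d"
    using wins_imp_found_reachable valid_hider_min_revealer by blast
  then have "card {T \<in> treasure_sets n d. wins s (min_revealer T) T [] d}
      \<le> card (found ` reachable_histories s d)"
    by (intro card_mono finite_imageI finite_reachable_histories[OF fin])
  also have "\<dots> \<le> card (reachable_histories s d)"
    by (intro card_image_le finite_reachable_histories[OF fin])
  also have "\<dots> \<le> k ^ d"
    by (rule card_reachable_histories_le[OF fin bound])
  finally show ?thesis .
qed

lemma hider_guarantee:
  assumes "d \<le> n"
  shows "\<exists>\<tau> :: (nat set \<times> revealer) pmf.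
        (\<forall>(T, r)\<in>set_pmf \<tau>. valid_hider n d T r) \<and>
        (\<forall>s. valid_searcher n k s \<longrightarrow>
           measure_pmf.prob \<tau> {(T, r). wins s r T [] d} \<le> real k ^ d / real (n choose d))"
proof (intro exI conjI allI impI)
  define D where "D = treasure_sets n d"
  have D: "finite D" "D \<noteq> {}"
    using treasure_sets_nonempty[OF assms] by (simp_all add: D_def)
  define \<tau> where "\<tau> = map_pmf (\<lambda>T. (T, min_revealer T)) (pmf_of_set D)"
  show "\<forall>(T, r)\<in>set_pmf \<tau>. valid_hider n d T r"
    using D valid_hider_min_revealer by (auto simp: \<tau>_def D_def)
  fix s
  assume "valid_searcher n k s"
  have "measure_pmf.prob \<tau> {(T, r). wins s r T [] d}
      = real (card {T \<in> D. wins s (min_revealer T) T [] d}) / real (card D)"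
    using D by (simp add: \<tau>_def vimage_def measure_pmf_of_set Int_def)
  also have "\<dots> \<le> real k ^ d / real (n choose d)"
    using card_found_treasure_sets_le[OF \<open>valid_searcher n k s\<close>, of d]
    by (simp add: D_def card_treasure_sets divide_right_mono flip: of_nat_power)
  finally show "measure_pmf.prob \<tau> {(T, r). wins s r T [] d} \<le> real k ^ d / real (n choose d)" .
qed

subsection \<open>The searcher's guarantee\<close>

definition block :: "nat \<Rightarrow> nat \<Rightarrow> nat set" where
  "block k j = {j * k ..< Suc j * k}"

definition block_searcher :: "nat \<Rightarrow> nat \<Rightarrow> (nat \<Rightarrow> nat) \<Rightarrow> searcher" where
  "block_searcher d k \<pi> h = (if length h < d then \<pi> ` block k (length h) else {})"

definition covers_blocks :: "nat \<Rightarrow> nat \<Rightarrow> (nat \<Rightarrow> nat) \<Rightarrow> nat set \<Rightarrow> bool" where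
  "covers_blocks d k \<pi> T \<longleftrightarrow> (\<forall>j<d. T \<inter> \<pi> ` block k j \<noteq> {})"

lemma card_block [simp]: "card (block k j) = k"
  by (simp add: block_def)

lemma finite_block [simp]: "finite (block k j)"
  by (simp add: block_def)

lemma block_div: "x \<in> block k j \<Longrightarrow> x div k = j"
  unfolding block_def by (intro div_nat_eqI) (auto simp: mult.commute)

lemma block_eq: "x \<in> block k i \<Longrightarrow> x \<in> block k j \<Longrightarrow> i = j"
  using block_div by metis

lemma block_subset:
  assumes "j < d" and "d * k \<le> n"
  shows "block k j \<subseteq> {0..<n}"
proof -
  have "Suc j * k \<le> d * k"
    using assms(1) by (intro mult_le_mono1) simp
  then show ?thesis
    using assms(2) by (auto simp: block_def)
qed

lemma block_Un_initial: "block k j \<union> {0..<j * k} = {0..<Suc j * k}"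
  by (auto simp: block_def)

lemma valid_block_searcher:
  assumes "\<pi> permutes {0..<n}" and "d * k \<le> n"
  shows "valid_searcher n k (block_searcher d k \<pi>)"
proof -
  have "\<pi> ` block k j \<subseteq> {0..<n}" if "j < d" for j
    using block_subset[OF that assms(2)] permutes_image[OF assms(1)] by blast
  moreover have "card (\<pi> ` block k j) \<le> k" for j
    using card_image_le[of "block k j" \<pi>] by simp
  ultimately show ?thesis
    by (simp add: valid_searcher_def block_searcher_def)
qed

text \<open>Invariant: after \<open>j\<close> rounds everything found lies in the first \<open>j\<close> permuted blocks, so
  the treasure in the next permuted block is still hidden.\<close>

lemma block_searcher_wins:
  assumes "inj \<pi>" and hider: "valid_hider n d T r" and "covers_blocks d k \<pi> T"
  shows "length h + m \<le> d \<Longrightarrow> found h \<subseteq> \<pi> ` {0..<length h * k} \<Longrightarrow>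
    wins (block_searcher d k \<pi>) r T h m"
proof (induction m arbitrary: h)
  case 0
  then show ?case by simp
next
  case (Suc m)
  let ?j = "length h"
  let ?G = "block_searcher d k \<pi> h"
  let ?h = "h @ [(?G, r h ?G)]"
  have G: "?G = \<pi> ` block k ?j"
    using Suc.prems(1) by (simp add: block_searcher_def)
  have "T \<inter> \<pi> ` block k ?j \<noteq> {}"
    using assms(3) Suc.prems(1) unfolding covers_blocks_def by simp
  then obtain y where y: "y \<in> block k ?j" "\<pi> y \<in> T"
    by blast
  have "y \<notin> {0..<?j * k}"
    using y(1) by (simp add: block_def)
  then have "\<pi> y \<notin> found h"
    using Suc.prems(2) inj_image_mem_iff[OF assms(1)] by blast
  then have hit: "?G \<inter> (T - found h) \<noteq> {}"
    using G y by blast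
  then have "r h ?G \<in> ?G"
    using hider unfolding valid_hider_def by blast
  then have "found ?h \<subseteq> \<pi> ` {0..<length ?h * k}"
    using Suc.prems(2) G block_Un_initial[of k ?j] by auto
  then have "wins (block_searcher d k \<pi>) r T ?h m"
    using Suc.IH Suc.prems(1) by simp
  then show ?case
    using hit by (simp add: Let_def)
qed

text \<open>Choosing one door in each block gives \<open>k\<^sup>d\<close> distinct covering treasure sets.\<close>

lemma card_covering_treasure_sets_ge:
  assumes \<pi>: "\<pi> permutes {0..<n}" and "d * k \<le> n"
  shows "k ^ d \<le> card {T \<in> treasure_sets n d. covers_blocks d k \<pi> T}"
proof -
  define choices where "choices = PiE {..<d} (block k)"
  define choice_set where "choice_set f = \<pi> ` f ` {..<d}" for f :: "nat \<Rightarrow> nat"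
  have inj\<pi>: "inj \<pi>"
    using \<pi> by (rule permutes_inj)
  have in_block: "f j \<in> block k j" if "f \<in> choices" "j < d" for f j
    using that unfolding choices_def by auto
  have inj_choice: "inj_on f {..<d}" if "f \<in> choices" for f
    using in_block[OF that] block_eq unfolding inj_on_def by (metis lessThan_iff)
  have "inj_on choice_set choices"
  proof (rule inj_onI)
    fix f g
    assume f: "f \<in> choices" and g: "g \<in> choices" and "choice_set f = choice_set g"
    then have same: "f ` {..<d} = g ` {..<d}"
      using inj\<pi> by (simp add: choice_set_def inj_image_eq_iff)
    show "f = g"
    proof (rule PiE_ext)
      fix i
      assume "i \<in> {..<d}"
      then have i: "i < d" and "f i \<in> g ` {..<d}"
        using same by auto
      then obtain j where j: "j < d" "f i = g j"
        by auto
      then have "i = j"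
        using block_eq[OF in_block[OF f i]] in_block[OF g j(1)] by simp
      then show "f i = g i"
        using j by simp
    qed (use f g in \<open>simp_all add: choices_def\<close>)
  qed
  moreover have "choice_set ` choices \<subseteq> {T \<in> treasure_sets n d. covers_blocks d k \<pi> T}"
  proof safe
    fix f
    assume f: "f \<in> choices"
    have "f ` {..<d} \<subseteq> {0..<n}"
      using in_block[OF f] block_subset[OF _ assms(2)] by blast
    moreover have "card (choice_set f) = d"
      unfolding choice_set_def using inj_choice[OF f]
      by (simp add: card_image inj_on_subset[OF inj\<pi>])
    ultimately show "choice_set f \<in> treasure_sets n d"
      using permutes_image[OF \<pi>] by (auto simp: treasure_sets_def choice_set_def)
    show "covers_blocks d k \<pi> (choice_set f)"
      using in_block[OF f] by (auto simp: covers_blocks_def choice_set_def)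
  qed
  ultimately have "card choices \<le> card {T \<in> treasure_sets n d. covers_blocks d k \<pi> T}"
    by (intro card_inj_on_le) simp_all
  then show ?thesis
    by (simp add: choices_def card_PiE)
qed

lemma exists_permutes_image:
  assumes "finite S" "A \<subseteq> S" "B \<subseteq> S" "card A = card B"
  shows "\<exists>\<rho>. \<rho> permutes S \<and> \<rho> ` A = B"
proof -
  have "finite A" "finite B"
    using assms finite_subset by blast+
  then obtain f where f: "bij_betw f A B"
    using assms(4) finite_same_card_bij by blast
  have "card (S - A) = card (S - B)"
    using assms \<open>finite A\<close> \<open>finite B\<close> by (simp add: card_Diff_subset)
  then obtain g where g: "bij_betw g (S - A) (S - B)"
    using finite_same_card_bij[of "S - A" "S - B"] assms(1) by auto
  define \<rho> where "\<rho> x = (if x \<in> A then f x else if x \<in> S then g x else x)" for x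
  have AB: "bij_betw \<rho> A B"
    using f by (rule bij_betw_cong[THEN iffD1, rotated]) (simp add: \<rho>_def)
  moreover have "bij_betw \<rho> (S - A) (S - B)"
    using g by (rule bij_betw_cong[THEN iffD1, rotated]) (simp add: \<rho>_def)
  ultimately have "bij_betw \<rho> (A \<union> (S - A)) (B \<union> (S - B))"
    by (rule bij_betw_combine) blast
  then have "bij_betw \<rho> S S"
    using assms(2,3) by (simp add: Un_Diff_cancel Un_absorb1)
  moreover have "\<rho> x = x" if "x \<notin> S" for x
    using that assms(2) unfolding \<rho>_def by auto
  ultimately have "\<rho> permutes S"
    by (rule bij_imp_permutes)
  then show ?thesis
    using AB by (auto simp: bij_betw_def)
qed

lemma covers_blocks_image:
  "covers_blocks d k \<pi> T \<Longrightarrow> covers_blocks d k (\<rho> \<circ> \<pi>) (\<rho> ` T)"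
  unfolding covers_blocks_def image_comp[symmetric] by blast

lemma card_covering_permutations_mono:
  assumes "T \<in> treasure_sets n d" "T' \<in> treasure_sets n d"
  shows "card {\<pi>. \<pi> permutes {0..<n} \<and> covers_blocks d k \<pi> T'}
       \<le> card {\<pi>. \<pi> permutes {0..<n} \<and> covers_blocks d k \<pi> T}"
proof -
  obtain \<rho> where \<rho>: "\<rho> permutes {0..<n}" "\<rho> ` T' = T"
    using exists_permutes_image[of "{0..<n}" T' T] assms by (auto simp: treasure_sets_def)
  have "inj_on ((\<circ>) \<rho>) {\<pi>. \<pi> permutes {0..<n} \<and> covers_blocks d k \<pi> T'}"
    using permutes_inj[OF \<rho>(1)] by (auto intro!: inj_onI simp: fun_eq_iff inj_eq)
  moreover have "(\<circ>) \<rho> ` {\<pi>. \<pi> permutes {0..<n} \<and> covers_blocks d k \<pi> T'}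
      \<subseteq> {\<pi>. \<pi> permutes {0..<n} \<and> covers_blocks d k \<pi> T}"
    using covers_blocks_image[of d k _ T' \<rho>] permutes_compose[OF _ \<rho>(1)] \<rho>(2) by auto
  ultimately show ?thesis
    by (intro card_inj_on_le) (simp_all add: finite_permutations)
qed

lemma sum_card_filter_swap:
  assumes "finite A" "finite B"
  shows "(\<Sum>a\<in>A. card {b\<in>B. Q a b}) = (\<Sum>b\<in>B. card {a\<in>A. Q a b})"
proof -
  have "(\<Sum>a\<in>A. card {b\<in>B. Q a b}) = (\<Sum>a\<in>A. \<Sum>b\<in>B. if Q a b then 1 else 0)"
    using assms by (simp add: sum.inter_filter[symmetric])
  also have "\<dots> = (\<Sum>b\<in>B. \<Sum>a\<in>A. if Q a b then 1 else 0)"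
    by (rule sum.swap)
  also have "\<dots> = (\<Sum>b\<in>B. card {a\<in>A. Q a b})"
    using assms by (simp add: sum.inter_filter[symmetric])
  finally show ?thesis .
qed

lemma card_covering_permutations_ge:
  assumes "T \<in> treasure_sets n d" and "d * k \<le> n"
  shows "card {\<pi>. \<pi> permutes {0..<n}} * k ^ d
       \<le> card {\<pi>. \<pi> permutes {0..<n} \<and> covers_blocks d k \<pi> T} * (n choose d)"
proof -
  define P where "P = {\<pi>. \<pi> permutes {0..<n}}"
  define D where "D = treasure_sets n d"
  define c where "c T' = card {\<pi>\<in>P. covers_blocks d k \<pi> T'}" for T'
  have "finite P"
    by (simp add: P_def finite_permutations)
  have "card P * k ^ d = (\<Sum>\<pi>\<in>P. k ^ d)"
    by simp
  also have "\<dots> \<le> (\<Sum>\<pi>\<in>P. card {T'\<in>D. covers_blocks d k \<pi> T'})"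
    using card_covering_treasure_sets_ge[OF _ assms(2)] by (intro sum_mono) (simp add: P_def D_def)
  also have "\<dots> = (\<Sum>T'\<in>D. c T')"
    unfolding c_def using \<open>finite P\<close> by (intro sum_card_filter_swap) (simp_all add: D_def)
  also have "\<dots> \<le> (\<Sum>T'\<in>D. c T)"
    using card_covering_permutations_mono[OF assms(1)]
    by (intro sum_mono) (simp add: c_def P_def D_def)
  also have "\<dots> = c T * (n choose d)"
    by (simp add: D_def card_treasure_sets)
  finally show ?thesis
    by (simp add: c_def P_def)
qed

lemma searcher_guarantee:
  assumes "d * k \<le> n"
  shows "\<exists>\<sigma> :: searcher pmf.
        (\<forall>s\<in>set_pmf \<sigma>. valid_searcher n k s) \<and>
        (\<forall>T r. valid_hider n d T r \<longrightarrow>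
           measure_pmf.prob \<sigma> {s. wins s r T [] d} \<ge> real k ^ d / real (n choose d))"
proof (intro exI conjI allI impI)
  define P where "P = {\<pi>. \<pi> permutes {0..<n}}"
  have P: "finite P" "P \<noteq> {}"
    using permutes_id[of "{0..<n}"] by (auto simp: P_def finite_permutations simp del: permutes_id)
  define \<sigma> where "\<sigma> = map_pmf (block_searcher d k) (pmf_of_set P)"
  show "\<forall>s\<in>set_pmf \<sigma>. valid_searcher n k s"
    using P valid_block_searcher[OF _ assms] by (auto simp: \<sigma>_def P_def)
  fix T r
  assume hider: "valid_hider n d T r"
  have T: "T \<in> treasure_sets n d"
    using hider by (rule valid_hider_treasure_set)
  define covering where "covering = {\<pi>\<in>P. covers_blocks d k \<pi> T}"
  have "0 < n choose d"
    using T card_gt_0_iff[of "treasure_sets n d"] by (auto simp: card_treasure_sets)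
  then have "real k ^ d / real (n choose d) \<le> real (card covering) / real (card P)"
    using card_covering_permutations_ge[OF T assms] P
    by (simp add: field_simps covering_def P_def card_gt_0_iff flip: of_nat_mult of_nat_power)
  also have "\<dots> \<le> real (card (P \<inter> {\<pi>. wins (block_searcher d k \<pi>) r T [] d})) / real (card P)"
  proof (intro divide_right_mono of_nat_mono card_mono)
    show "covering \<subseteq> P \<inter> {\<pi>. wins (block_searcher d k \<pi>) r T [] d}"
      using block_searcher_wins[OF permutes_inj hider, where h="[]" and m=d]
      by (auto simp: covering_def P_def)
  qed (use P in simp_all)
  also have "\<dots> = measure_pmf.prob \<sigma> {s. wins s r T [] d}"
    using P by (simp add: \<sigma>_def vimage_def measure_pmf_of_set)
  finally show "real k ^ d / real (n choose d) \<le> measure_pmf.prob \<sigma> {s. wins s r T [] d}" .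
qed

theorem theorem1:
  fixes n d k :: nat
  assumes "0 < n" and "0 < d" and "0 < k" and "d * k \<le> n"
  shows "is_value_v1 n d k (real k ^ d / real (n choose d))"
proof -
  have "d \<le> d * k"
    using assms(3) by simp
  then have "d \<le> n"
    using assms(4) by linarith
  then show ?thesis
    unfolding is_value_v1_def using searcher_guarantee[OF assms(4)] hider_guarantee by blast
qed

end
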